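(* Let $\mathbf{F}_{\Phi}$ be a fence over the Cantor space $\mathbf{C}$, where $\Phi=(\varphi^L,\varphi^U)$. (1) If $\mathbf{F}_{\Phi}$ is a Scissorhand fence, then the set $\mathbf{D}_1=\{x\in\mathbf{C} : \mathbf{F}_{\Phi}(x)\text{ is a singleton}\}$ is a dense $G_\delta$ subset of $\mathbf{C}$. (2) If $\mathbf{F}_{\Phi}$ is a two-sided Scissorhand fence, then the set $\mathbf{D}_2=\{(x,y)\in\mathbf{F}_{\Phi} : \mathbf{F}_{\Phi}(x)=\{y\}\}$ is a dense $G_\delta$ subset of $\mathbf{F}_{\Phi}$.
   Context: $\mathbf{C}$ denotes the Cantor space. For $\Phi=(\varphi^L,\varphi^U)$ with $\varphi^L,\varphi^U:\mathbf{C}\to[0,1]$, $\varphi^L$ lower semicontinuous, $\varphi^U$ upper semicontinuous and $\varphi^L\le\varphi^U$, the fence is $\mathbf{F}_{\Phi}=\{(x,t)\in\mathbf{C}\times[0,1]:\varphi^L(x)\le t\le\varphi^U(x)\}$, and for $x\in\mathbf{C}$, $\mathbf{F}_{\Phi}(x)=\{t\in[0,1]:(x,t)\in\mathbf{F}_{\Phi}\}$. A fence $\mathbf{F}_{\Phi}$ is a Scissorhand fence if the graph $\{(x,\varphi^U(x)):x\in\mathbf{C}\}$ is dense in $\mathbf{F}_{\Phi}$ and $\{x\in\mathbf{C}:\varphi^L(x)\neq\varphi^U(x)\}$ is dense in $\mathbf{C}$; it is a two-sided Scissorhand fence if in addition the graph $\{(x,\varphi^L(x)):x\in\mathbf{C}\}$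 is dense in $\mathbf{F}_{\Phi}$. *)

theory Defs
  imports "HOL-Analysis.Analysis"
begin

text \<open>The Cantor space: infinite binary sequences with the product topology
  (the library's product topology on function spaces, bool being discrete).\<close>
type_synonym cantor = "nat \<Rightarrow> bool"

definition lower_semicont :: "('a::topological_space \<Rightarrow> real) \<Rightarrow> bool" where
  "lower_semicont f \<longleftrightarrow> (\<forall>a. open {x. a < f x})"

definition upper_semicont :: "('a::topological_space \<Rightarrow> real) \<Rightarrow> bool" where
  "upper_semicont f \<longleftrightarrow> (\<forall>a. open {x. f x < a})"

definition fence_pair :: "(cantor \<Rightarrow> real) \<Rightarrow> (cantor \<Rightarrow> real) \<Rightarrow> bool" where
  "fence_pair phiL phiU \<longleftrightarrow>
     (\<forall>x. phiL x \<in> {0..1} \<and> phiU x \<in> {0..1}) \<and>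
     lower_semicont phiL \<and> upper_semicont phiU \<and> (\<forall>x. phiL x \<le> phiU x)"

definition fence :: "(cantor \<Rightarrow> real) \<Rightarrow> (cantor \<Rightarrow> real) \<Rightarrow> (cantor \<times> real) set" where
  "fence phiL phiU = {(x, t). t \<in> {0..1} \<and> phiL x \<le> t \<and> t \<le> phiU x}"

definition fence_at :: "(cantor \<Rightarrow> real) \<Rightarrow> (cantor \<Rightarrow> real) \<Rightarrow> cantor \<Rightarrow> real set" where
  "fence_at phiL phiU x = {t \<in> {0..1}. (x, t) \<in> fence phiL phiU}"

definition scissorhand :: "(cantor \<Rightarrow> real) \<Rightarrow> (cantor \<Rightarrow> real) \<Rightarrow> bool" where
  "scissorhand phiL phiU \<longleftrightarrow>
     fence_pair phiL phiU \<and>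
     fence phiL phiU \<subseteq> closure {(x, phiU x) | x. True} \<and>
     closure {x. phiL x \<noteq> phiU x} = UNIV"

definition two_sided_scissorhand :: "(cantor \<Rightarrow> real) \<Rightarrow> (cantor \<Rightarrow> real) \<Rightarrow> bool" where
  "two_sided_scissorhand phiL phiU \<longleftrightarrow>
     scissorhand phiL phiU \<and>
     fence phiL phiU \<subseteq> closure {(x, phiL x) | x. True}"

end

theory Submission
  imports Defs
begin

text \<open>The gap \<open>phiU - phiL\<close> is upper semicontinuous, so the coincidence set
  \<open>{phiL = phiU}\<close>, which is \<open>D\<^sub>1\<close>, is a \<open>G\<^sub>\<delta>\<close>, and \<open>D\<^sub>2\<close> is the trace on the fence of its
  cylinder.  If the graph of \<open>phiU\<close> is dense in the fence, the gap is small on a dense open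
  set: take \<open>x\<close> where \<open>phiU\<close> is almost minimal on a neighbourhood \<open>V\<close>; the fence point
  \<open>(x, phiL x)\<close> is approximated by graph points \<open>(x', phiU x')\<close> with \<open>x' \<in> V\<close>, whence
  \<open>phiL x\<close> is almost \<open>phiU x\<close>.  The Baire category theorem on the compact Cantor space
  makes \<open>D\<^sub>1\<close> dense.  For \<open>D\<^sub>2\<close>, density of both graphs yields, near any fence point
  \<open>(x, t)\<close>, a nonempty open set on which \<open>t - d < phiL \<le> phiU < t + d\<close>; it meets \<open>D\<^sub>1\<close>.\<close>

lemma upper_semicont_diff:
  assumes "upper_semicont f" "lower_semicont g"
  shows "upper_semicont (\<lambda>x. f x - g x)"
  unfolding upper_semicont_def
proof
  fix a
  have "{x. f x - g x < a} = (\<Union>q. {x. f x < q} \<inter> {x. q - a < g x})"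
  proof (intro set_eqI iffI)
    fix x assume "x \<in> {x. f x - g x < a}"
    then show "x \<in> (\<Union>q. {x. f x < q} \<inter> {x. q - a < g x})"
      by (intro UN_I[of "(f x + g x + a) / 2"]) auto
  qed auto
  moreover have "open ({x. f x < q} \<inter> {x. q - a < g x})" for q
    using assms unfolding lower_semicont_def upper_semicont_def by blast
  ultimately show "open {x. f x - g x < a}"
    by auto
qed

lemma upper_semicont_comp_fst:
  assumes "upper_semicont f"
  shows "upper_semicont (\<lambda>p. f (fst p))"
  unfolding upper_semicont_def
proof
  fix a
  have "{p. f (fst p) < a} = fst -` {x. f x < a}"
    by auto
  then show "open {p. f (fst p) < a}"
    using assms open_vimage_fst unfolding upper_semicont_def by metis
qed

lemma Collect_le_eq_Inter_less:
  fixes f :: "'a \<Rightarrow> real"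
  shows "{x. f x \<le> a} = (\<Inter>n. {x. f x < a + 1 / Suc n})"
proof (intro set_eqI iffI)
  fix x assume "x \<in> {x. f x \<le> a}"
  have "f x < a + 1 / Suc n" for n
  proof -
    have "0 < 1 / real (Suc n)"
      by simp
    with \<open>x \<in> {x. f x \<le> a}\<close> show ?thesis
      unfolding mem_Collect_eq by linarith
  qed
  then show "x \<in> (\<Inter>n. {x. f x < a + 1 / Suc n})"
    by blast
next
  fix x assume x: "x \<in> (\<Inter>n. {x. f x < a + 1 / Suc n})"
  show "x \<in> {x. f x \<le> a}"
  proof (rule ccontr)
    assume "x \<notin> {x. f x \<le> a}"
    then obtain n where "1 / real (Suc n) < f x - a"
      using nat_approx_posE[of "f x - a"] by auto
    moreover have "f x < a + 1 / Suc n"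
      using x by blast
    ultimately show False
      by linarith
  qed
qed

lemma gdelta_in_upper_semicont_le:
  assumes "upper_semicont f"
  shows "gdelta_in euclidean {x. f x \<le> a}"
  unfolding Collect_le_eq_Inter_less
  using assms unfolding upper_semicont_def
  by (intro gdelta_in_Inter) (auto intro!: open_imp_gdelta_in)

lemma Hausdorff_space_euclidean_t2: "Hausdorff_space (euclidean :: 'a::t2_space topology)"
  unfolding Hausdorff_space_def disjnt_def using hausdorff by auto

lemma Hausdorff_space_euclidean_fun: "Hausdorff_space (euclidean :: ('a \<Rightarrow> 'b::t2_space) topology)"
  using Hausdorff_space_product_topology Hausdorff_space_euclidean_t2
  by (metis euclidean_product_topology)

lemma compact_space_euclidean_fun_finite:
  "compact_space (euclidean :: ('a \<Rightarrow> 'b::{finite, topological_space}) topology)"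
proof -
  have "compact_space (euclidean :: 'b topology)"
    by (simp add: compact_space_def compactin_euclidean_iff finite_imp_compact)
  then show ?thesis
    using compact_space_product_topology by (metis euclidean_product_topology)
qed

lemma Baire_compact_Hausdorff:
  fixes G :: "'a::topological_space set set"
  assumes "compact_space (euclidean :: 'a topology)" "Hausdorff_space (euclidean :: 'a topology)"
    and "countable G" "\<And>T. T \<in> G \<Longrightarrow> open T \<and> closure T = UNIV"
  shows "closure (\<Inter>G) = UNIV"
proof -
  have "euclidean closure_of \<Inter>G = topspace (euclidean :: 'a topology)"
    using assms compact_imp_locally_compact_space compact_Hausdorff_imp_regular_space
    by (intro Baire_category) auto
  then show ?thesis
    by simp
qed

lemma closure_eq_UNIV_iff:
  fixes S :: "'a::topological_space set"
  shows "closure S = UNIV \<longleftrightarrow> (\<forall>U. open U \<longrightarrow> U \<noteq> {} \<longrightarrow> U \<inter> S \<noteq> {})"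
proof (intro iffI allI impI)
  fix U :: "'a set" assume "closure S = UNIV" "open U" "U \<noteq> {}"
  then show "U \<inter> S \<noteq> {}"
    using open_Int_closure_eq_empty[of U S] by simp
next
  assume dense: "\<forall>U. open U \<longrightarrow> U \<noteq> {} \<longrightarrow> U \<inter> S \<noteq> {}"
  have "- closure S \<inter> S = {}"
    using closure_subset by blast
  then have "- closure S = {}"
    using dense by blast
  then show "closure S = UNIV"
    by (metis Compl_empty_eq double_compl)
qed

lemma in_closure_prod_real_iff:
  fixes S :: "('a::topological_space \<times> real) set"
  shows "(x, t) \<in> closure S \<longleftrightarrow>
    (\<forall>U d. open U \<longrightarrow> x \<in> U \<longrightarrow> 0 < d \<longrightarrow> (\<exists>(z, s)\<in>S. z \<in> U \<and> \<bar>s - t\<bar> < d))"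
proof
  assume "(x, t) \<in> closure S"
  show "\<forall>U d. open U \<longrightarrow> x \<in> U \<longrightarrow> 0 < d \<longrightarrow> (\<exists>(z, s)\<in>S. z \<in> U \<and> \<bar>s - t\<bar> < d)"
  proof (intro allI impI)
    fix U and d :: real assume "open U" "x \<in> U" "0 < d"
    then have "open (U \<times> ball t d)" "(x, t) \<in> U \<times> ball t d"
      by (auto simp: open_Times)
    then have "S \<inter> (U \<times> ball t d) \<noteq> {}"
      using \<open>(x, t) \<in> closure S\<close> open_Int_closure_eq_empty by blast
    then show "\<exists>(z, s)\<in>S. z \<in> U \<and> \<bar>s - t\<bar> < d"
      by (auto simp: dist_real_def abs_minus_commute)
  qed
next
  assume near: "\<forall>U d. open U \<longrightarrow> x \<in> U \<longrightarrow> 0 < d \<longrightarrow> (\<exists>(z, s)\<in>S. z \<in> U \<and> \<bar>s - t\<bar> < d)"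
  show "(x, t) \<in> closure S"
    unfolding closure_iff_nhds_not_empty
  proof (intro allI impI)
    fix A W assume "W \<subseteq> A" "open W" "(x, t) \<in> W"
    then obtain U B where "open U" "open B" "(x, t) \<in> U \<times> B" "U \<times> B \<subseteq> W"
      by (metis open_prod_elim)
    moreover obtain d where "d > 0" "ball t d \<subseteq> B"
      using \<open>open B\<close> \<open>(x, t) \<in> U \<times> B\<close> open_contains_ball by blast
    moreover have "x \<in> U"
      using \<open>(x, t) \<in> U \<times> B\<close> by simp
    ultimately obtain z s where "(z, s) \<in> S" "z \<in> U" "\<bar>s - t\<bar> < d"
      using near by blast
    moreover have "s \<in> ball t d"
      using \<open>\<bar>s - t\<bar> < d\<close> by (simp add: dist_real_def abs_minus_commute)
    ultimately show "S \<inter> A \<noteq> {}"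
      using \<open>U \<times> B \<subseteq> W\<close> \<open>W \<subseteq> A\<close> \<open>ball t d \<subseteq> B\<close> by blast
  qed
qed

lemma in_closure_graphE:
  fixes f :: "'a::topological_space \<Rightarrow> real"
  assumes "(x, t) \<in> closure {(x, f x) | x. True}" "open U" "x \<in> U" "0 < d"
  obtains z where "z \<in> U" "\<bar>f z - t\<bar> < d"
  using assms unfolding in_closure_prod_real_iff by blast

lemma exists_open_almost_minimal:
  fixes f :: "'a::topological_space \<Rightarrow> real"
  assumes "bdd_below (f ` U)" "bdd_above (f ` U)" "open U" "U \<noteq> {}" "e > 0"
  obtains V x where "open V" "V \<subseteq> U" "x \<in> V" "\<And>y. y \<in> V \<Longrightarrow> f x < f y + e"
proof -
  txt \<open>\<open>M\<close> collects lower bounds of \<open>f\<close> on nonempty open \<open>V \<subseteq> U\<close>; a bound within \<open>e/2\<close> of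
    \<open>Sup M\<close> gives \<open>V\<close>, and \<open>f\<close> cannot stay above \<open>Sup M + e/2\<close> on \<open>V\<close>.\<close>
  define M where "M = {r. \<exists>V. open V \<and> V \<noteq> {} \<and> V \<subseteq> U \<and> (\<forall>y\<in>V. r \<le> f y)}"
  have M_iff: "r \<in> M \<longleftrightarrow> (\<exists>V. open V \<and> V \<noteq> {} \<and> V \<subseteq> U \<and> (\<forall>y\<in>V. r \<le> f y))" for r
    by (simp add: M_def)
  have "M \<noteq> {}"
    using assms(1,3,4) unfolding M_iff bdd_below_def ex_in_conv[symmetric] by blast
  obtain b where b: "\<And>y. y \<in> U \<Longrightarrow> f y \<le> b"
    using assms(2) unfolding bdd_above_def by auto
  have "bdd_above M"
  proof (rule bdd_aboveI)
    fix r assume "r \<in> M"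
    then obtain V y where "y \<in> V" "V \<subseteq> U" "\<forall>y\<in>V. r \<le> f y"
      unfolding M_iff by blast
    then show "r \<le> b"
      using b by force
  qed
  obtain r where "r \<in> M" "Sup M - e/2 < r"
    using less_cSup_iff[OF \<open>M \<noteq> {}\<close> \<open>bdd_above M\<close>, of "Sup M - e/2"] \<open>e > 0\<close> by auto
  then obtain V where V: "open V" "V \<noteq> {}" "V \<subseteq> U" "\<And>y. y \<in> V \<Longrightarrow> r \<le> f y"
    unfolding M_iff by auto
  have "Sup M + e/2 \<notin> M"
    using cSup_upper[OF _ \<open>bdd_above M\<close>] \<open>e > 0\<close> by force
  then obtain x where "x \<in> V" "f x < Sup M + e/2"
    using V(1-3) unfolding M_iff by (meson not_le)
  then show ?thesis
    using that[OF \<open>open V\<close> \<open>V \<subseteq> U\<close> \<open>x \<in> V\<close>] V(4) \<open>Sup M - e/2 < r\<close> by force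
qed

lemma fence_pair_gap_upper_semicont:
  assumes "fence_pair phiL phiU"
  shows "upper_semicont (\<lambda>x. phiU x - phiL x)"
  using assms upper_semicont_diff unfolding fence_pair_def by blast

lemma fence_at_eq:
  assumes "fence_pair phiL phiU"
  shows "fence_at phiL phiU x = {phiL x .. phiU x}"
proof -
  have "0 \<le> phiL x" "phiU x \<le> 1"
    using assms unfolding fence_pair_def by auto
  then show ?thesis
    unfolding fence_at_def fence_def by auto
qed

lemma fence_singleton_fibres_eq:
  assumes "fence_pair phiL phiU"
  shows "{x. \<exists>y. fence_at phiL phiU x = {y}} = {x. phiU x - phiL x \<le> 0}"
  using assms unfolding fence_at_eq[OF assms] fence_pair_def
  by (auto simp: atLeastAtMost_singleton_iff intro: order.antisym)

lemma fence_singleton_points_eq: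
  assumes "fence_pair phiL phiU"
  shows "{(x, y). (x, y) \<in> fence phiL phiU \<and> fence_at phiL phiU x = {y}} =
    fence phiL phiU \<inter> {p. phiU (fst p) - phiL (fst p) \<le> 0}"
  using assms unfolding fence_at_eq[OF assms] fence_pair_def fence_def
  by (auto simp: atLeastAtMost_singleton_iff intro: order.antisym)

lemma scissorhand_small_gap:
  assumes "scissorhand phiL phiU" "open U" "U \<noteq> {}" "e > 0"
  shows "\<exists>x\<in>U. phiU x - phiL x < e"
proof -
  have fp: "fence_pair phiL phiU"
    and graph: "fence phiL phiU \<subseteq> closure {(x, phiU x) | x. True}"
    using assms(1) unfolding scissorhand_def by auto
  have "bdd_below (phiU ` U)" "bdd_above (phiU ` U)"
    using fp unfolding fence_pair_def bdd_below_def bdd_above_def by auto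
  then obtain V x where V: "open V" "V \<subseteq> U" "x \<in> V" "\<And>y. y \<in> V \<Longrightarrow> phiU x < phiU y + e/2"
    using exists_open_almost_minimal[OF _ _ assms(2,3) half_gt_zero[OF assms(4)]] by blast
  have "(x, phiL x) \<in> fence phiL phiU"
    using fp unfolding fence_pair_def fence_def by auto
  with graph obtain y where "y \<in> V" "\<bar>phiU y - phiL x\<bar> < e/2"
    using in_closure_graphE[OF _ V(1,3) half_gt_zero[OF assms(4)]] by blast
  then have "phiU x - phiL x < e"
    using V(4)[of y] by linarith
  then show ?thesis
    using V(2,3) by blast
qed

lemma scissorhand_closure_coincidence:
  assumes "scissorhand phiL phiU"
  shows "closure {x. phiU x - phiL x \<le> 0} = UNIV"
proof -
  have "fence_pair phiL phiU"
    using assms by (simp add: scissorhand_def)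
  then have "open {x. phiU x - phiL x < 0 + 1 / Suc n}" for n
    using fence_pair_gap_upper_semicont unfolding upper_semicont_def by blast
  moreover have "closure {x. phiU x - phiL x < 0 + 1 / Suc n} = UNIV" for n
    unfolding closure_eq_UNIV_iff
  proof (intro allI impI)
    fix U :: "cantor set" assume "open U" "U \<noteq> {}"
    moreover have "0 < 1 / real (Suc n)"
      by simp
    ultimately obtain x where "x \<in> U" "phiU x - phiL x < 1 / Suc n"
      using scissorhand_small_gap[OF assms] by blast
    then show "U \<inter> {x. phiU x - phiL x < 0 + 1 / Suc n} \<noteq> {}"
      by auto
  qed
  ultimately show ?thesis
    unfolding Collect_le_eq_Inter_less
    by (intro Baire_compact_Hausdorff[OF compact_space_euclidean_fun_finite
          Hausdorff_space_euclidean_fun]) auto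
qed

lemma two_sided_scissorhand_band:
  assumes "two_sided_scissorhand phiL phiU" "(x, t) \<in> fence phiL phiU" "open U" "x \<in> U" "d > 0"
  shows "\<exists>z\<in>U. t - d < phiL z \<and> phiU z < t + d"
proof -
  have fp: "fence_pair phiL phiU"
    and graphU: "fence phiL phiU \<subseteq> closure {(x, phiU x) | x. True}"
    and graphL: "fence phiL phiU \<subseteq> closure {(x, phiL x) | x. True}"
    using assms(1) unfolding two_sided_scissorhand_def scissorhand_def by auto
  obtain x1 where x1: "x1 \<in> U" "\<bar>phiU x1 - t\<bar> < d/2"
    using graphU assms(2) in_closure_graphE[OF _ assms(3,4) half_gt_zero[OF assms(5)]] by blast
  define U1 where "U1 = U \<inter> {z. phiU z < t + d}"
  have "open U1"
    using fp assms(3) unfolding U1_def fence_pair_def upper_semicont_def by blast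
  moreover have "x1 \<in> U1"
    using x1 \<open>d > 0\<close> unfolding U1_def by (simp, arith)
  moreover have "(x1, phiU x1) \<in> fence phiL phiU"
    using fp unfolding fence_pair_def fence_def by auto
  ultimately obtain z where "z \<in> U1" "\<bar>phiL z - phiU x1\<bar> < d/2"
    using graphL in_closure_graphE[OF _ _ _ half_gt_zero[OF assms(5)]] by blast
  moreover have "t - d < phiL z"
    using \<open>\<bar>phiL z - phiU x1\<bar> < d/2\<close> x1(2) by arith
  ultimately show ?thesis
    unfolding U1_def by blast
qed

lemma two_sided_scissorhand_closure_coincidence:
  assumes "two_sided_scissorhand phiL phiU"
  shows "fence phiL phiU \<subseteq> closure (fence phiL phiU \<inter> {p. phiU (fst p) - phiL (fst p) \<le> 0})"
proof
  fix p assume "p \<in> fence phiL phiU"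
  then obtain x t where p: "p = (x, t)" "(x, t) \<in> fence phiL phiU"
    by (cases p) auto
  have sc: "scissorhand phiL phiU" and fp: "fence_pair phiL phiU"
    using assms unfolding two_sided_scissorhand_def scissorhand_def by auto
  show "p \<in> closure (fence phiL phiU \<inter> {p. phiU (fst p) - phiL (fst p) \<le> 0})"
    unfolding p in_closure_prod_real_iff
  proof (intro allI impI)
    fix U and d :: real assume "open U" "x \<in> U" "0 < d"
    define W where "W = U \<inter> {z. t - d < phiL z} \<inter> {z. phiU z < t + d}"
    have "open W"
      using fp \<open>open U\<close> unfolding W_def fence_pair_def lower_semicont_def upper_semicont_def
      by blast
    moreover have "W \<noteq> {}"
      using two_sided_scissorhand_band[OF assms p(2) \<open>open U\<close> \<open>x \<in> U\<close> \<open>0 < d\<close>]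
      unfolding W_def by blast
    ultimately obtain z where "z \<in> W" "phiU z - phiL z \<le> 0"
      using scissorhand_closure_coincidence[OF sc] unfolding closure_eq_UNIV_iff by blast
    moreover have "(z, phiU z) \<in> fence phiL phiU" "phiL z \<le> phiU z"
      using fp unfolding fence_pair_def fence_def by auto
    moreover have "\<bar>phiU z - t\<bar> < d"
      using \<open>z \<in> W\<close> \<open>phiL z \<le> phiU z\<close> unfolding W_def by (simp, arith)
    ultimately show "\<exists>(z, s)\<in>fence phiL phiU \<inter> {p. phiU (fst p) - phiL (fst p) \<le> 0}.
        z \<in> U \<and> \<bar>s - t\<bar> < d"
      unfolding W_def by (intro bexI[of _ "(z, phiU z)"]) auto
  qed
qed

theorem proposition2p7:
  fixes phiL phiU :: "cantor \<Rightarrow> real"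
  assumes "fence_pair phiL phiU"
  shows "(scissorhand phiL phiU \<longrightarrow>
            (let D1 = {x. \<exists>y. fence_at phiL phiU x = {y}} in
               gdelta_in euclidean D1 \<and> closure D1 = UNIV))
       \<and> (two_sided_scissorhand phiL phiU \<longrightarrow>
            (let D2 = {(x, y). (x, y) \<in> fence phiL phiU \<and> fence_at phiL phiU x = {y}} in
               gdelta_in (subtopology euclidean (fence phiL phiU)) D2 \<and>
               fence phiL phiU \<subseteq> closure D2))"
proof -
  have gap_usc: "upper_semicont (\<lambda>x. phiU x - phiL x)"
    using fence_pair_gap_upper_semicont[OF assms] .
  have "gdelta_in euclidean {p. phiU (fst p) - phiL (fst p) \<le> 0}"
    by (rule gdelta_in_upper_semicont_le[OF upper_semicont_comp_fst[OF gap_usc]])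
  then have "gdelta_in (subtopology euclidean (fence phiL phiU))
      (fence phiL phiU \<inter> {p. phiU (fst p) - phiL (fst p) \<le> 0})"
    unfolding gdelta_in_subtopology by blast
  moreover have "gdelta_in euclidean {x. phiU x - phiL x \<le> 0}"
    by (rule gdelta_in_upper_semicont_le[OF gap_usc])
  ultimately show ?thesis
    unfolding Let_def fence_singleton_fibres_eq[OF assms] fence_singleton_points_eq[OF assms]
  proof (intro conjI impI)
    assume "two_sided_scissorhand phiL phiU"
    then show "fence phiL phiU \<subseteq>
        closure (fence phiL phiU \<inter> {p. phiU (fst p) - phiL (fst p) \<le> 0})"
      by (rule two_sided_scissorhand_closure_coincidence)
  qed (use scissorhand_closure_coincidence in auto)
qed

end
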